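(* Let $A$ be a selfadjoint operator on a separable infinite-dimensional Hilbert space $\mathcal{H}$ which is bounded below, let $a<\inf\sigma(A)$, and let $\mathcal{L}_n\subset\operatorname{D}((A-a)^{1/2})$ be a finite-dimensional subspace. Let $\mathcal{G}_n=(A-a)^{1/2}\mathcal{L}_n$ with orthogonal projection $p_n$. Then for every real $\lambda\neq a$, \[ \lambda\in\sigma(\pi_nA|_{\mathcal{L}_n})\iff(\lambda-a)^{-1}\in\sigma\big(p_n(A-a)^{-1}|_{\mathcal{G}_n}\big). \]
   Context: Here $\pi_nA|_{\mathcal{L}_n}:\mathcal{L}_n\to\mathcal{L}_n$ denotes the compression of $A$ defined via the quadratic form: for $x\in\mathcal{L}_n$ it is the unique element $A_nx\in\mathcal{L}_n$ with $\langle y,A_nx\rangle=\langle(A-a)^{1/2}y,(A-a)^{1/2}x\rangle+a\langle y,x\rangle$ for all $y\in\mathcal{L}_n$. *)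

theory Defs
  imports "HOL-Analysis.Analysis"
begin

text \<open>A complex Hilbert space is encoded as a real Hilbert space (a type of class
  real_inner and complete_space) together with a complex structure J (multiplication
  by the imaginary unit): J is real-linear, J (J x) = - x and J is isometric for the
  real inner product.  The complex inner product (linear in the second argument) and
  complex scalar multiplication are derived from J.\<close>

definition complex_structure :: "('h::real_inner \<Rightarrow> 'h) \<Rightarrow> bool" where
  "complex_structure J \<longleftrightarrow> linear J \<and> (\<forall>x. J (J x) = - x) \<and> (\<forall>x y. inner (J x) (J y) = inner x y)"

definition cscale :: "('h::real_vector \<Rightarrow> 'h) \<Rightarrow> complex \<Rightarrow> 'h \<Rightarrow> 'h" where
  "cscale J c x = Re c *\<^sub>R x + Im c *\<^sub>R J x"

definition cinner :: "('h::real_inner \<Rightarrow> 'h) \<Rightarrow> 'h \<Rightarrow> 'h \<Rightarrow> complex" where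
  "cinner J x y = Complex (inner x y) (- inner x (J y))"

definition csubspace :: "('h::real_vector \<Rightarrow> 'h) \<Rightarrow> 'h set \<Rightarrow> bool" where
  "csubspace J S \<longleftrightarrow> subspace S \<and> (\<forall>x\<in>S. J x \<in> S)"

definition clinear_on :: "('h::real_vector \<Rightarrow> 'h) \<Rightarrow> 'h set \<Rightarrow> ('h \<Rightarrow> 'h) \<Rightarrow> bool" where
  "clinear_on J D A \<longleftrightarrow> csubspace J D \<and>
     (\<forall>x\<in>D. \<forall>y\<in>D. A (x + y) = A x + A y) \<and>
     (\<forall>c x. x \<in> D \<longrightarrow> A (cscale J c x) = cscale J c (A x))"

text \<open>Self-adjointness: densely defined, and the adjoint equals A (same domain and values).\<close>
definition selfadjoint :: "('h::{real_inner,complete_space} \<Rightarrow> 'h) \<Rightarrow> 'h set \<Rightarrow> ('h \<Rightarrow> 'h) \<Rightarrow> bool" where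
  "selfadjoint J D A \<longleftrightarrow> clinear_on J D A \<and> closure D = UNIV \<and>
     {y. \<exists>z. \<forall>x\<in>D. cinner J (A x) y = cinner J x z} = D \<and>
     (\<forall>x\<in>D. \<forall>y\<in>D. cinner J (A x) y = cinner J x (A y))"

definition bounded_below_op :: "('h::real_inner \<Rightarrow> 'h) \<Rightarrow> 'h set \<Rightarrow> ('h \<Rightarrow> 'h) \<Rightarrow> bool" where
  "bounded_below_op J D A \<longleftrightarrow> (\<exists>c. \<forall>x\<in>D. c * (norm x)\<^sup>2 \<le> Re (cinner J x (A x)))"

definition positive_op :: "('h::real_inner \<Rightarrow> 'h) \<Rightarrow> 'h set \<Rightarrow> ('h \<Rightarrow> 'h) \<Rightarrow> bool" where
  "positive_op J D A \<longleftrightarrow> (\<forall>x\<in>D. 0 \<le> Re (cinner J x (A x)))"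

text \<open>Spectrum of an operator B with domain D, viewed as an operator into the space V:
  lambda is in the resolvent set iff B - lambda is a bijection D \<rightarrow> V with bounded inverse.\<close>
definition spec_on :: "('h::real_normed_vector \<Rightarrow> 'h) \<Rightarrow> 'h set \<Rightarrow> 'h set \<Rightarrow> ('h \<Rightarrow> 'h) \<Rightarrow> complex set" where
  "spec_on J D V B = {mu. \<not> (bij_betw (\<lambda>x. B x - cscale J mu x) D V \<and>
       (\<exists>K. \<forall>x\<in>D. norm x \<le> K * norm (B x - cscale J mu x)))}"

text \<open>(DT, T) is the positive self-adjoint square root of the operator B with domain D
  (i.e. T is positive self-adjoint and T^2 = B as unbounded operators, including domains).\<close>
definition is_pos_sqrt :: "('h::{real_inner,complete_space} \<Rightarrow> 'h) \<Rightarrow> 'h set \<Rightarrow> ('h \<Rightarrow> 'h) \<Rightarrow> 'h set \<Rightarrow> ('h \<Rightarrow> 'h) \<Rightarrow> bool" where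
  "is_pos_sqrt J D B DT T \<longleftrightarrow> selfadjoint J DT T \<and> positive_op J DT T \<and>
     {x\<in>DT. T x \<in> DT} = D \<and> (\<forall>x\<in>D. T (T x) = B x)"

definition shifted_inverse :: "'h set \<Rightarrow> ('h::real_vector \<Rightarrow> 'h) \<Rightarrow> real \<Rightarrow> 'h \<Rightarrow> 'h" where
  "shifted_inverse D A a y = (THE x. x \<in> D \<and> A x - a *\<^sub>R x = y)"

definition orth_proj :: "('h::real_inner \<Rightarrow> 'h) \<Rightarrow> 'h set \<Rightarrow> 'h \<Rightarrow> 'h" where
  "orth_proj J G x = (THE g. g \<in> G \<and> (\<forall>h\<in>G. cinner J h (x - g) = 0))"

text \<open>The compression pi_n A|_L of A to L, defined through the quadratic form of A,
  where T = (A - a)^(1/2).\<close>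
definition form_compression :: "('h::real_inner \<Rightarrow> 'h) \<Rightarrow> ('h \<Rightarrow> 'h) \<Rightarrow> real \<Rightarrow> 'h set \<Rightarrow> 'h \<Rightarrow> 'h" where
  "form_compression J T a L x = (THE z. z \<in> L \<and>
      (\<forall>y\<in>L. cinner J y z = cinner J (T y) (T x) + complex_of_real a * cinner J y x))"

end

theory Submission
  imports Defs
begin

text \<open>Both compressions act on finite-dimensional spaces, so their spectra consist of eigenvalues.
  With T = (A - a)^(1/2), the eigenvalue equation for the compression of A to L says
  <T y, T x> = (l - a) <y, x> for all y in L.  Since T (A - a)^-1 T is the identity on the
  domain of T, we have <T y, (A - a)^-1 T x> = <y, x>, so the same condition says that T x is an
  eigenvector of the compression of (A - a)^-1 to T L with eigenvalue (l - a)^-1; and T is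
  injective.  The analytic input is that a lies in the resolvent set of A: for a self-adjoint
  operator bounded below, every \<mu> far enough to the left gives A - \<mu> an a-priori bound, hence a
  closed range (A is closed) whose orthogonal complement is trivial (A is self-adjoint), so
  A - \<mu> is onto by the projection theorem.\<close>

section \<open>Complex structures\<close>

lemma cscale_of_real [simp]: "cscale J (complex_of_real r) x = r *\<^sub>R x"
  by (simp add: cscale_def)

lemma Re_cinner [simp]: "Re (cinner J x y) = x \<bullet> y"
  by (simp add: cinner_def)

locale complex_structure_space =
  fixes J :: "'h::real_inner \<Rightarrow> 'h"
  assumes complex_structure: "complex_structure J"
begin

lemma linear_J: "linear J"
  using complex_structure by (simp add: complex_structure_def)

lemma J_J [simp]: "J (J x) = - x"
  using complex_structure by (simp add: complex_structure_def)

lemma inner_J_J [simp]: "J x \<bullet> J y = x \<bullet> y"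
  using complex_structure by (simp add: complex_structure_def)

lemma J_add [simp]: "J (x + y) = J x + J y"
  and J_diff [simp]: "J (x - y) = J x - J y"
  and J_scaleR [simp]: "J (r *\<^sub>R x) = r *\<^sub>R J x"
  using linear_J by (simp_all add: linear_add linear_diff linear_scale)

lemma bounded_linear_J: "bounded_linear J"
proof -
  have "norm (J x) = norm x" for x
    by (simp add: norm_eq_sqrt_inner)
  then show ?thesis
    using linear_J by (intro bounded_linear_intro[of J 1]) (simp_all add: linear_add linear_scale)
qed

lemma inner_J_left: "J x \<bullet> y = - (x \<bullet> J y)"
  using inner_J_J[of x "J y"] by simp

lemma inner_J_self [simp]: "x \<bullet> J x = 0"
  using inner_J_left[of x x] by (simp add: inner_commute)

lemma cinner_eq_iff: "cinner J x y = cinner J u v \<longleftrightarrow> x \<bullet> y = u \<bullet> v \<and> x \<bullet> J y = u \<bullet> J v"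
  by (simp add: cinner_def complex_eq_iff)

lemma cinner_eq_0_iff: "cinner J x y = 0 \<longleftrightarrow> x \<bullet> y = 0 \<and> x \<bullet> J y = 0"
  by (simp add: cinner_def complex_eq_iff)

lemma cinner_self_eq_0_iff [simp]: "cinner J x x = 0 \<longleftrightarrow> x = 0"
  by (simp add: cinner_eq_0_iff)

lemma cinner_add_right: "cinner J x (y + z) = cinner J x y + cinner J x z"
  and cinner_diff_left: "cinner J (x - y) z = cinner J x z - cinner J y z"
  and cinner_diff_right: "cinner J x (y - z) = cinner J x y - cinner J x z"
  and cinner_scaleR_right: "cinner J x (r *\<^sub>R y) = complex_of_real r * cinner J x y"
  by (simp_all add: cinner_def complex_eq_iff inner_add_left inner_add_right
      inner_diff_left inner_diff_right)

lemma cinner_cscale_left: "cinner J (cscale J c x) y = cnj c * cinner J x y"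
  by (simp add: cinner_def cscale_def complex_eq_iff inner_J_left algebra_simps)

lemma cinner_cscale_right: "cinner J x (cscale J c y) = c * cinner J x y"
  by (simp add: cinner_def cscale_def complex_eq_iff algebra_simps)

lemma cscale_add_right: "cscale J c (x + y) = cscale J c x + cscale J c y"
  by (simp add: cscale_def algebra_simps)

lemma cscale_ii [simp]: "cscale J \<i> x = J x"
  by (simp add: cscale_def)

lemma tendsto_cinner_right:
  "(f \<longlongrightarrow> y) F \<Longrightarrow> ((\<lambda>n. cinner J x (f n)) \<longlongrightarrow> cinner J x y) F"
  unfolding cinner_def
  by (intro tendsto_intros bounded_linear.tendsto[OF bounded_linear_J])

lemma csubspace_J: "csubspace J S \<Longrightarrow> x \<in> S \<Longrightarrow> J x \<in> S"
  by (simp add: csubspace_def)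

lemma csubspace_imp_subspace: "csubspace J S \<Longrightarrow> subspace S"
  by (simp add: csubspace_def)

lemma J_cscale: "J (cscale J c x) = cscale J c (J x)"
  by (simp add: cscale_def algebra_simps)

lemma tendsto_cscale: "(f \<longlongrightarrow> x) F \<Longrightarrow> ((\<lambda>n. cscale J c (f n)) \<longlongrightarrow> cscale J c x) F"
  unfolding cscale_def by (intro tendsto_intros bounded_linear.tendsto[OF bounded_linear_J])

end

section \<open>Finite-dimensional subspaces of real inner product spaces\<close>

definition real_linear_on :: "'a::real_vector set \<Rightarrow> ('a \<Rightarrow> 'b::real_vector) \<Rightarrow> bool" where
  "real_linear_on S f \<longleftrightarrow>
     (\<forall>x\<in>S. \<forall>y\<in>S. f (x + y) = f x + f y) \<and> (\<forall>r. \<forall>x\<in>S. f (r *\<^sub>R x) = r *\<^sub>R f x)"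

lemma real_linear_onD:
  assumes "real_linear_on S f"
  shows real_linear_on_add: "x \<in> S \<Longrightarrow> y \<in> S \<Longrightarrow> f (x + y) = f x + f y"
    and real_linear_on_scaleR: "x \<in> S \<Longrightarrow> f (r *\<^sub>R x) = r *\<^sub>R f x"
  using assms by (simp_all add: real_linear_on_def)

lemma real_linear_onI:
  "(\<And>x y. x \<in> S \<Longrightarrow> y \<in> S \<Longrightarrow> f (x + y) = f x + f y) \<Longrightarrow>
   (\<And>r x. x \<in> S \<Longrightarrow> f (r *\<^sub>R x) = r *\<^sub>R f x) \<Longrightarrow> real_linear_on S f"
  by (simp add: real_linear_on_def)

lemma real_linear_on_subset: "real_linear_on S f \<Longrightarrow> T \<subseteq> S \<Longrightarrow> real_linear_on T f"
  unfolding real_linear_on_def by blast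

lemma linear_imp_real_linear_on: "linear f \<Longrightarrow> real_linear_on S f"
  by (simp add: real_linear_on_def linear_add linear_scale)

lemma real_linear_on_0: "real_linear_on S f \<Longrightarrow> subspace S \<Longrightarrow> f 0 = 0"
  using real_linear_on_scaleR[of S f 0 0] by (simp add: subspace_0)

lemma real_linear_on_diff:
  assumes f: "real_linear_on S f" and S: "subspace S" and "x \<in> S" "y \<in> S"
  shows "f (x - y) = f x - f y"
  using real_linear_on_add[OF f, of "x - y" y] assms by (simp add: subspace_diff eq_diff_eq)

lemma real_linear_on_shift: "real_linear_on S f \<Longrightarrow> real_linear_on S (\<lambda>x. f x - l *\<^sub>R x)"
  by (simp add: real_linear_on_def algebra_simps)

lemma real_linear_on_inv_into:
  assumes f: "real_linear_on S f" and S: "subspace S" and bij: "bij_betw f S S"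
  shows "real_linear_on S (inv_into S f)"
proof (rule real_linear_onI)
  have inv: "inv_into S f y \<in> S" "f (inv_into S f y) = y" if "y \<in> S" for y
    using bij that by (auto simp: bij_betw_def inv_into_into f_inv_into_f)
  have inj: "inv_into S f (f x) = x" if "x \<in> S" for x
    using bij that by (simp add: bij_betw_def)
  show "inv_into S f (x + y) = inv_into S f x + inv_into S f y" if "x \<in> S" "y \<in> S" for x y
    using inj[of "inv_into S f x + inv_into S f y"] inv[OF that(1)] inv[OF that(2)] S
    by (simp add: real_linear_on_add[OF f] subspace_add)
  show "inv_into S f (r *\<^sub>R x) = r *\<^sub>R inv_into S f x" if "x \<in> S" for r x
    using inj[of "r *\<^sub>R inv_into S f x"] inv[OF that] S
    by (simp add: real_linear_on_scaleR[OF f] subspace_scale)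
qed

lemma real_linear_on_subspace_image:
  assumes f: "real_linear_on S f" and S: "subspace S"
  shows "subspace (f ` S)"
  unfolding subspace_def
proof (intro conjI ballI allI)
  show "0 \<in> f ` S"
    using real_linear_on_0[OF f S] subspace_0[OF S] by (metis image_eqI)
next
  fix x y assume "x \<in> f ` S" "y \<in> f ` S"
  then obtain u v where "u \<in> S" "v \<in> S" "x = f u" "y = f v"
    by blast
  then show "x + y \<in> f ` S"
    using real_linear_on_add[OF f] subspace_add[OF S] by (metis image_eqI)
next
  fix r x assume "x \<in> f ` S"
  then obtain u where "u \<in> S" "x = f u"
    by blast
  then show "r *\<^sub>R x \<in> f ` S"
    using real_linear_on_scaleR[OF f] subspace_scale[OF S] by (metis image_eqI)
qed

text \<open>For an orthogonal family U this is the orthogonal projection onto span U; a zero vector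
  in U contributes nothing because 0 / 0 = 0.\<close>

definition basis_proj :: "'a::real_inner set \<Rightarrow> 'a \<Rightarrow> 'a" where
  "basis_proj U x = (\<Sum>b\<in>U. (b \<bullet> x / (b \<bullet> b)) *\<^sub>R b)"

lemma linear_basis_proj: "linear (basis_proj U)"
  unfolding basis_proj_def
  by (rule linearI) (simp_all add: inner_add_right add_divide_distrib scaleR_add_left
      sum.distrib scaleR_sum_right)

lemma basis_proj_in_span: "basis_proj U x \<in> span U"
  unfolding basis_proj_def by (intro span_sum span_scale span_base)

lemma basis_proj_orthogonal:
  assumes U: "finite U" "pairwise orthogonal U" and s: "s \<in> span U"
  shows "s \<bullet> (x - basis_proj U x) = 0"
proof -
  have "orthogonal (x - basis_proj U x) b" if b: "b \<in> U" for b
  proof -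
    have "b \<bullet> basis_proj U x = (\<Sum>c\<in>U. (c \<bullet> x / (c \<bullet> c)) * (b \<bullet> c))"
      by (simp add: basis_proj_def inner_sum_right)
    also have "\<dots> = (b \<bullet> x / (b \<bullet> b)) * (b \<bullet> b)"
    proof -
      have "(\<Sum>c\<in>U - {b}. (c \<bullet> x / (c \<bullet> c)) * (b \<bullet> c)) = 0"
        using U(2) b by (intro sum.neutral) (auto simp: pairwise_def orthogonal_def)
      then show ?thesis
        by (simp add: sum.remove[OF U(1) b])
    qed
    also have "\<dots> = b \<bullet> x"
      by simp
    finally show ?thesis
      by (simp add: orthogonal_def inner_commute[of _ b] inner_diff_right)
  qed
  then have "orthogonal (x - basis_proj U x) s"
    by (rule orthogonal_to_span[OF s])
  then show ?thesis
    by (simp add: orthogonal_def inner_commute)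
qed

lemma basis_proj_id:
  assumes "finite U" "pairwise orthogonal U" "y \<in> span U"
  shows "basis_proj U y = y"
proof -
  have "y - basis_proj U y \<in> span U"
    using assms(3) basis_proj_in_span by (rule span_diff)
  then have "(y - basis_proj U y) \<bullet> (y - basis_proj U y) = 0"
    by (rule basis_proj_orthogonal[OF assms(1,2)])
  then show ?thesis
    by simp
qed

lemma finite_span_orthogonal_basis:
  fixes B :: "'a::real_inner set"
  assumes "finite B"
  obtains U where "finite U" "0 \<notin> U" "pairwise orthogonal U" "span U = span B"
  using assms
proof (induction B arbitrary: thesis rule: finite_induct)
  case empty
  show ?case
    by (rule empty.prems[of "{}"]) simp_all
next
  case (insert a B)
  obtain U where U: "finite U" "0 \<notin> U" "pairwise orthogonal U" "span U = span B"
    using insert.IH by blast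
  define a' where "a' = a - basis_proj U a"
  have span_a': "span (insert a' U) = span (insert a B)"
  proof -
    have "span (insert a' U) = span (insert a U)"
      by (rule eq_span_insert_eq) (simp add: a'_def basis_proj_in_span span_neg)
    also have "\<dots> = span (insert a B)"
      by (simp only: span_insert U(4))
    finally show ?thesis .
  qed
  show ?case
  proof (cases "a' = 0")
    case True
    then show ?thesis
      using span_a' U insert.prems by (metis span_redundant span_zero)
  next
    case False
    have "pairwise orthogonal (insert a' U)"
      using basis_proj_orthogonal[OF U(1,3) span_base] U(3)
      by (intro pairwise_orthogonal_insert) (auto simp: a'_def orthogonal_def inner_commute)
    then show ?thesis
      using insert.prems[of "insert a' U"] U span_a' False by simp
  qed
qed

lemma real_linear_on_span_extends:
  fixes f :: "'a::real_inner \<Rightarrow> 'b::real_vector"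
  assumes B: "finite B" and f: "real_linear_on (span B) f"
  obtains g where "linear g" "\<And>x. x \<in> span B \<Longrightarrow> g x = f x"
proof -
  obtain U where U: "finite U" "pairwise orthogonal U" "span U = span B"
    using finite_span_orthogonal_basis[OF B] by metis
  have P: "basis_proj U x \<in> span B" for x
    using basis_proj_in_span U(3) by blast
  have "linear (f \<circ> basis_proj U)"
    using P by (intro linearI)
      (simp_all add: linear_add[OF linear_basis_proj] linear_scale[OF linear_basis_proj]
        real_linear_on_add[OF f] real_linear_on_scaleR[OF f])
  moreover have "(f \<circ> basis_proj U) x = f x" if "x \<in> span B" for x
    using basis_proj_id[OF U(1,2)] U(3) that by simp
  ultimately show ?thesis
    using that by blast
qed

lemma real_linear_on_span_image:
  fixes f :: "'a::real_inner \<Rightarrow> 'b::real_vector"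
  assumes "finite B" and "real_linear_on (span B) f"
  shows "f ` span B = span (f ` B)"
proof -
  obtain g where g: "linear g" "\<And>x. x \<in> span B \<Longrightarrow> g x = f x"
    using real_linear_on_span_extends[OF assms] by blast
  have "f ` B = g ` B"
    using g(2) span_base by (metis image_cong)
  then show ?thesis
    using g linear_span_image[OF g(1), of B] by (metis image_cong)
qed

lemma real_linear_on_span_inj_imp_surj:
  fixes f :: "'a::real_inner \<Rightarrow> 'a"
  assumes B: "finite B" and f: "real_linear_on (span B) f"
    and into: "f ` span B \<subseteq> span B" and inj: "inj_on f (span B)"
  shows "f ` span B = span B"
proof -
  obtain U where U: "finite U" "0 \<notin> U" "pairwise orthogonal U" "span U = span B"
    using finite_span_orthogonal_basis[OF B] by metis
  obtain g where g: "linear g" "\<And>x. x \<in> span B \<Longrightarrow> g x = f x"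
    using real_linear_on_span_extends[OF assms(1,2)] by blast
  have indep: "independent U"
    using pairwise_orthogonal_independent U(2,3) by blast
  have fU: "f ` U = g ` U"
    using g(2) U(4) span_base by (metis image_cong)
  have indep_fU: "independent (f ` U)"
    unfolding fU using U(4) g inj
    by (intro linear_independent_injective_image[OF g(1) indep]) (simp add: inj_on_def)
  have card_fU: "card (f ` U) = card U"
    using inj_on_subset[OF inj, of U] U(4) span_superset by (intro card_image) blast
  have fU_sub: "f ` U \<subseteq> span U"
    using into U(4) span_superset by blast
  have "span U \<subseteq> span (f ` U)"
  proof -
    have "y \<in> span (f ` U)" if y: "y \<in> span U" for y
    proof (rule ccontr)
      assume "y \<notin> span (f ` U)"
      then have "independent (insert y (f ` U))" "y \<notin> f ` U"
        using indep_fU span_base[of y "f ` U"] by (auto simp: independent_insert)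
      moreover have "insert y (f ` U) \<subseteq> span U"
        using y fU_sub by blast
      ultimately show False
        using independent_span_bound[OF U(1)] card_fU U(1) by fastforce
    qed
    then show ?thesis by blast
  qed
  then show ?thesis
    using real_linear_on_span_image[of U f] U(1,4) f into by auto
qed

lemma real_linear_on_span_bounded:
  fixes f :: "'a::real_inner \<Rightarrow> 'b::real_normed_vector"
  assumes B: "finite B" and f: "real_linear_on (span B) f"
  obtains K where "\<And>x. x \<in> span B \<Longrightarrow> norm (f x) \<le> K * norm x"
proof -
  obtain U where U: "finite U" "0 \<notin> U" "pairwise orthogonal U" "span U = span B"
    using finite_span_orthogonal_basis[OF B] by metis
  obtain g where g: "linear g" "\<And>x. x \<in> span B \<Longrightarrow> g x = f x"
    using real_linear_on_span_extends[OF assms] by blast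
  define K where "K = (\<Sum>b\<in>U. norm (g b) / norm b)"
  have "norm (f x) \<le> K * norm x" if x: "x \<in> span B" for x
  proof -
    have "f x = g (basis_proj U x)"
      using basis_proj_id[OF U(1,3)] U(4) x g(2) by simp
    also have "\<dots> = (\<Sum>b\<in>U. (b \<bullet> x / (b \<bullet> b)) *\<^sub>R g b)"
      by (simp add: basis_proj_def linear_sum[OF g(1)] linear_scale[OF g(1)])
    finally have "norm (f x) \<le> (\<Sum>b\<in>U. norm ((b \<bullet> x / (b \<bullet> b)) *\<^sub>R g b))"
      by (simp only: norm_sum)
    also have "\<dots> = (\<Sum>b\<in>U. \<bar>b \<bullet> x / (b \<bullet> b)\<bar> * norm (g b))"
      by simp
    also have "\<dots> \<le> (\<Sum>b\<in>U. norm x / norm b * norm (g b))"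
    proof (intro sum_mono mult_right_mono)
      fix b assume "b \<in> U"
      then have "b \<noteq> 0"
        using U(2) by blast
      then have "\<bar>b \<bullet> x\<bar> / (norm b * norm b) \<le> norm x / norm b"
        using Cauchy_Schwarz_ineq2[of b x] by (simp add: divide_simps mult.commute)
      then show "\<bar>b \<bullet> x / (b \<bullet> b)\<bar> \<le> norm x / norm b"
        by (simp add: dot_square_norm power2_eq_square)
    qed simp
    also have "\<dots> = K * norm x"
      by (simp add: K_def sum_distrib_left sum_distrib_right mult.commute)
    finally show ?thesis .
  qed
  then show ?thesis
    using that by blast
qed

lemma finite_span_riesz:
  fixes \<phi> :: "'a::real_inner \<Rightarrow> real"
  assumes B: "finite B" and \<phi>: "real_linear_on (span B) \<phi>"
  obtains z where "z \<in> span B" "\<And>y. y \<in> span B \<Longrightarrow> y \<bullet> z = \<phi> y"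
proof -
  obtain U where U: "finite U" "pairwise orthogonal U" "span U = span B"
    using finite_span_orthogonal_basis[OF B] by metis
  obtain g where g: "linear g" "\<And>x. x \<in> span B \<Longrightarrow> g x = \<phi> x"
    using real_linear_on_span_extends[OF assms] by blast
  define z where "z = (\<Sum>b\<in>U. (g b / (b \<bullet> b)) *\<^sub>R b)"
  have "y \<bullet> z = \<phi> y" if y: "y \<in> span B" for y
  proof -
    have "\<phi> y = g (basis_proj U y)"
      using basis_proj_id[OF U(1,2)] U(3) y g(2) by simp
    also have "\<dots> = y \<bullet> z"
      by (simp add: basis_proj_def z_def linear_sum[OF g(1)] linear_scale[OF g(1)] inner_sum_right
          inner_commute mult.commute)
    finally show ?thesis by simp
  qed
  moreover have "z \<in> span B"
    unfolding z_def U(3)[symmetric] by (intro span_sum span_scale span_base)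
  ultimately show ?thesis
    using that by blast
qed

lemma spec_on_finite_span_iff_eigenvector:
  fixes M :: "'a::real_inner \<Rightarrow> 'a"
  assumes B: "finite B" and M: "real_linear_on (span B) M" and into: "M ` span B \<subseteq> span B"
  shows "complex_of_real l \<in> spec_on J (span B) (span B) M \<longleftrightarrow> (\<exists>x\<in>span B. x \<noteq> 0 \<and> M x = l *\<^sub>R x)"
proof -
  define N where "N = (\<lambda>x. M x - l *\<^sub>R x)"
  have N: "real_linear_on (span B) N"
    unfolding N_def using M by (rule real_linear_on_shift)
  have N_into: "N ` span B \<subseteq> span B"
    using into by (auto simp: N_def intro: span_diff span_scale)
  have spec: "complex_of_real l \<in> spec_on J (span B) (span B) M \<longleftrightarrow>
      \<not> (bij_betw N (span B) (span B) \<and> (\<exists>K. \<forall>x\<in>span B. norm x \<le> K * norm (N x)))"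
    by (simp add: spec_on_def N_def)
  have N_diff: "N (x - y) = N x - N y" if "x \<in> span B" "y \<in> span B" for x y
    using real_linear_on_diff[OF N subspace_span that] .
  have "inj_on N (span B) \<longleftrightarrow> (\<forall>x\<in>span B. N x = 0 \<longrightarrow> x = 0)"
  proof
    show "inj_on N (span B) \<Longrightarrow> \<forall>x\<in>span B. N x = 0 \<longrightarrow> x = 0"
      using real_linear_on_0[OF N subspace_span] span_zero by (metis inj_onD)
    show "\<forall>x\<in>span B. N x = 0 \<longrightarrow> x = 0 \<Longrightarrow> inj_on N (span B)"
      using N_diff by (intro inj_onI) (metis eq_iff_diff_eq_0 span_diff)
  qed
  then have inj_iff: "inj_on N (span B) \<longleftrightarrow> \<not> (\<exists>x\<in>span B. x \<noteq> 0 \<and> M x = l *\<^sub>R x)"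
    by (auto simp: N_def)
  have "bij_betw N (span B) (span B) \<and> (\<exists>K. \<forall>x\<in>span B. norm x \<le> K * norm (N x))"
    if inj: "inj_on N (span B)"
  proof
    show bij: "bij_betw N (span B) (span B)"
      using real_linear_on_span_inj_imp_surj[OF B N N_into inj] inj by (simp add: bij_betw_def)
    obtain K where K: "\<And>y. y \<in> span B \<Longrightarrow> norm (inv_into (span B) N y) \<le> K * norm y"
      using real_linear_on_span_bounded[OF B real_linear_on_inv_into[OF N subspace_span bij]] by blast
    have "norm x \<le> K * norm (N x)" if "x \<in> span B" for x
      using K[of "N x"] N_into inj that by auto
    then show "\<exists>K. \<forall>x\<in>span B. norm x \<le> K * norm (N x)"
      by blast
  qed
  then show ?thesis
    using spec inj_iff by (meson bij_betw_def)
qed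

context complex_structure_space
begin

lemma orth_proj_eqI:
  assumes S: "subspace S" and g: "g \<in> S" and orth: "\<forall>h\<in>S. cinner J h (x - g) = 0"
  shows "orth_proj J S x = g"
  unfolding orth_proj_def
proof (rule the_equality)
  fix g' assume g': "g' \<in> S \<and> (\<forall>h\<in>S. cinner J h (x - g') = 0)"
  then have "g' - g \<in> S"
    using S g by (simp add: subspace_diff)
  then have "cinner J (g' - g) ((x - g) - (x - g')) = 0"
    using g' orth by (simp add: cinner_diff_right)
  then show "g' = g"
    by simp
qed (use g orth in blast)

lemma orth_proj_finite_dim:
  assumes S: "csubspace J S" and B: "finite B" "span B = S"
  shows orth_proj_in: "orth_proj J S x \<in> S"
    and orth_proj_orthogonal: "\<forall>h\<in>S. cinner J h (x - orth_proj J S x) = 0"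
    and linear_orth_proj: "linear (orth_proj J S)"
proof -
  obtain U where U: "finite U" "pairwise orthogonal U" "span U = S"
    using finite_span_orthogonal_basis[OF B(1)] B(2) by metis
  have orth: "\<forall>h\<in>S. cinner J h (y - basis_proj U y) = 0" for y
  proof
    fix h assume h: "h \<in> S"
    then have "h \<bullet> (y - basis_proj U y) = 0" "J h \<bullet> (y - basis_proj U y) = 0"
      using basis_proj_orthogonal[OF U(1,2)] csubspace_J[OF S h] U(3) by blast+
    then show "cinner J h (y - basis_proj U y) = 0"
      by (simp add: cinner_eq_0_iff inner_J_left)
  qed
  have eq: "orth_proj J S = basis_proj U"
    using orth basis_proj_in_span U(3) csubspace_imp_subspace[OF S]
    by (intro ext orth_proj_eqI) auto
  show "orth_proj J S x \<in> S" "\<forall>h\<in>S. cinner J h (x - orth_proj J S x) = 0"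
    using orth basis_proj_in_span U(3) by (auto simp: eq)
  show "linear (orth_proj J S)"
    by (simp add: eq linear_basis_proj)
qed

lemma csubspace_riesz:
  assumes S: "csubspace J (span B)" and B: "finite B" and \<phi>: "real_linear_on (span B) \<phi>"
  obtains z where "z \<in> span B" "\<And>y. y \<in> span B \<Longrightarrow> cinner J y z = Complex (\<phi> y) (\<phi> (J y))"
proof -
  obtain z where z: "z \<in> span B" "\<And>y. y \<in> span B \<Longrightarrow> y \<bullet> z = \<phi> y"
    using finite_span_riesz[OF B \<phi>] by blast
  have "cinner J y z = Complex (\<phi> y) (\<phi> (J y))" if "y \<in> span B" for y
    using z(2)[OF that] z(2)[OF csubspace_J[OF S that]] by (simp add: cinner_def inner_J_left)
  then show ?thesis
    using that z(1) by blast
qed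

end

section \<open>The projection theorem\<close>

lemma parallelogram_law:
  fixes p q :: "'a::real_inner"
  shows "(norm (p + q))\<^sup>2 + (norm (p - q))\<^sup>2 = 2 * (norm p)\<^sup>2 + 2 * (norm q)\<^sup>2"
  by (simp add: power2_norm_eq_inner inner_add_left inner_add_right inner_diff_left
      inner_diff_right inner_commute[of q p])

lemma convex_dist_power2_le:
  fixes R :: "'a::real_inner set"
  assumes convex: "convex R" and u: "u \<in> R" and v: "v \<in> R"
    and d: "0 \<le> d" "\<forall>s\<in>R. d \<le> dist y s"
  shows "(dist u v)\<^sup>2 \<le> 2 * ((dist y u)\<^sup>2 - d\<^sup>2) + 2 * ((dist y v)\<^sup>2 - d\<^sup>2)"
proof -
  let ?m = "(1/2) *\<^sub>R u + (1/2) *\<^sub>R v"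
  have "?m \<in> R"
    using convexD[OF convex u v] by simp
  then have "d\<^sup>2 \<le> (norm (y - ?m))\<^sup>2"
    using d by (simp add: dist_norm power_mono)
  moreover have "(y - u) + (y - v) = 2 *\<^sub>R (y - ?m)" "(y - u) - (y - v) = v - u"
    by (simp_all add: algebra_simps scaleR_2)
  then have "(dist u v)\<^sup>2 = 2 * (dist y u)\<^sup>2 + 2 * (dist y v)\<^sup>2 - 4 * (norm (y - ?m))\<^sup>2"
    using parallelogram_law[of "y - u" "y - v"]
    by (simp add: dist_norm norm_minus_commute power_mult_distrib)
  ultimately show ?thesis
    by (simp add: right_diff_distrib)
qed

lemma Cauchy_if_tail_dist_power2_le:
  assumes "\<And>N m n. N \<le> m \<Longrightarrow> N \<le> n \<Longrightarrow> (dist (r m) (r n))\<^sup>2 \<le> 4 / Suc N"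
  shows "Cauchy r"
proof (rule metric_CauchyI)
  fix e :: real assume e: "e > 0"
  obtain N where N: "4 / e\<^sup>2 < real N"
    using reals_Archimedean2 by blast
  have small: "4 / real (Suc N) < e\<^sup>2"
    using N e by (simp add: field_simps add_pos_nonneg add.commute add_strict_increasing)
  have "dist (r m) (r n) < e" if "N \<le> m" "N \<le> n" for m n
  proof -
    have "(dist (r m) (r n))\<^sup>2 < e\<^sup>2"
      using assms[OF that] small by linarith
    then show ?thesis
      using e by (simp add: power_less_imp_less_base)
  qed
  then show "\<exists>M. \<forall>m\<ge>M. \<forall>n\<ge>M. dist (r m) (r n) < e"
    by blast
qed

lemma infdist_power2_approx:
  assumes nonempty: "R \<noteq> {}" and e: "e > 0"
  shows "\<exists>r\<in>R. (dist y r)\<^sup>2 < (infdist y R)\<^sup>2 + e"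
proof -
  have "infdist y R < sqrt ((infdist y R)\<^sup>2 + e)"
    using e infdist_nonneg[of y R] real_sqrt_less_mono[of "(infdist y R)\<^sup>2" "(infdist y R)\<^sup>2 + e"]
    by simp
  then obtain r where "r \<in> R" "dist y r < sqrt ((infdist y R)\<^sup>2 + e)"
    using cInf_lessD[of "(\<lambda>s. dist y s) ` R"] nonempty by (auto simp: infdist_notempty)
  then show ?thesis
    using real_sqrt_less_iff[of "(dist y r)\<^sup>2"] by auto
qed

lemma closed_convex_dist_attains_inf:
  fixes R :: "'a::{real_inner,complete_space} set"
  assumes closed: "closed R" and convex: "convex R" and nonempty: "R \<noteq> {}"
  obtains r where "r \<in> R" "\<And>s. s \<in> R \<Longrightarrow> dist y r \<le> dist y s"
proof -
  define d where "d = infdist y R"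
  have d: "0 \<le> d" "\<forall>s\<in>R. d \<le> dist y s"
    by (simp_all add: d_def infdist_nonneg infdist_le)
  have "\<forall>n. \<exists>r\<in>R. (dist y r)\<^sup>2 < d\<^sup>2 + 1 / Suc n"
    using infdist_power2_approx[OF nonempty] by (simp add: d_def)
  then obtain r where r: "\<And>n. r n \<in> R" "\<And>n. (dist y (r n))\<^sup>2 < d\<^sup>2 + 1 / Suc n"
    by metis
  have "(dist (r m) (r n))\<^sup>2 \<le> 4 / Suc N" if "N \<le> m" "N \<le> n" for N m n
  proof -
    have "1 / Suc m \<le> 1 / real (Suc N)" "1 / Suc n \<le> 1 / real (Suc N)"
      "4 / real (Suc N) = 4 * (1 / real (Suc N))"
      using that by (simp_all add: frac_le)
    then show ?thesis
      using convex_dist_power2_le[OF convex r(1)[of m] r(1)[of n] d] r(2)[of m] r(2)[of n]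
      by (smt (verit))
  qed
  then obtain r0 where lim: "r \<longlonglongrightarrow> r0"
    using Cauchy_if_tail_dist_power2_le Cauchy_convergent_iff convergent_def by blast
  have r0: "r0 \<in> R"
    using closed_sequentially[OF closed] r(1) lim by blast
  have "(dist y r0)\<^sup>2 \<le> d\<^sup>2"
  proof (rule LIMSEQ_le)
    show "(\<lambda>n. (dist y (r n))\<^sup>2) \<longlonglongrightarrow> (dist y r0)\<^sup>2"
      by (intro tendsto_intros lim)
    show "(\<lambda>n. d\<^sup>2 + 1 / Suc n) \<longlonglongrightarrow> d\<^sup>2"
      using tendsto_add[OF tendsto_const LIMSEQ_Suc[OF lim_inverse_n']] by (simp add: inverse_eq_divide)
    show "\<exists>N. \<forall>n\<ge>N. (dist y (r n))\<^sup>2 \<le> d\<^sup>2 + 1 / Suc n"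
      using r(2) less_imp_le by blast
  qed
  then have "dist y r0 \<le> d"
    using d(1) by (simp add: power2_le_iff_abs_le)
  then show ?thesis
    using that r0 d(2) by fastforce
qed

lemma power2_norm_diff_scaleR:
  fixes w s :: "'a::real_inner"
  shows "(norm (w - c *\<^sub>R s))\<^sup>2 = (norm w)\<^sup>2 - 2 * c * (s \<bullet> w) + c\<^sup>2 * (s \<bullet> s)"
  by (simp add: power2_norm_eq_inner inner_diff_left inner_diff_right inner_commute[of w s])
    (simp add: algebra_simps power2_eq_square)

lemma best_approximation_orthogonal:
  fixes R :: "'a::real_inner set"
  assumes R: "subspace R" and r: "r \<in> R" and best: "\<And>s. s \<in> R \<Longrightarrow> dist y r \<le> dist y s"
    and s: "s \<in> R"
  shows "s \<bullet> (y - r) = 0"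
proof (cases "s = 0")
  case False
  define p q where "p = s \<bullet> (y - r)" and "q = s \<bullet> s"
  have q: "q > 0"
    using False by (simp add: q_def)
  have "r + (p / q) *\<^sub>R s \<in> R"
    using R r s by (simp add: subspace_add subspace_scale)
  then have "(norm (y - r))\<^sup>2 \<le> (norm ((y - r) - (p / q) *\<^sub>R s))\<^sup>2"
    using best by (simp add: dist_norm diff_diff_eq power_mono)
  also have "\<dots> = (norm (y - r))\<^sup>2 - 2 * (p / q) * p + (p / q)\<^sup>2 * q"
    unfolding p_def q_def by (rule power2_norm_diff_scaleR)
  also have "\<dots> = (norm (y - r))\<^sup>2 - p\<^sup>2 / q"
    using q by (simp add: power2_eq_square)
  finally have "p\<^sup>2 / q \<le> 0"
    by simp
  then show ?thesis
    using q by (simp add: p_def divide_le_0_iff)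
qed simp

lemma closed_subspace_eq_UNIV_if_orthogonal_trivial:
  fixes R :: "'a::{real_inner,complete_space} set"
  assumes closed: "closed R" and R: "subspace R" and trivial: "\<And>y. (\<forall>s\<in>R. s \<bullet> y = 0) \<Longrightarrow> y = 0"
  shows "R = UNIV"
proof -
  have "y \<in> R" for y
  proof -
    obtain r where r: "r \<in> R" "\<And>s. s \<in> R \<Longrightarrow> dist y r \<le> dist y s"
      using closed_convex_dist_attains_inf[OF closed subspace_imp_convex[OF R]] subspace_0[OF R]
      by blast
    then have "y - r = 0"
      using trivial best_approximation_orthogonal[OF R r] by blast
    then show ?thesis
      using r(1) by simp
  qed
  then show ?thesis
    by blast
qed

lemma dense_orthogonal_eq_0:
  fixes z :: "'a::real_inner"
  assumes dense: "closure S = UNIV" and orth: "\<And>w. w \<in> S \<Longrightarrow> w \<bullet> z = 0"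
  shows "z = 0"
proof -
  have "closed {w. w \<bullet> z = 0}"
    by (intro closed_Collect_eq continuous_intros)
  then have "closure S \<subseteq> {w. w \<bullet> z = 0}"
    using orth by (intro closure_minimal) auto
  then have "z \<bullet> z = 0"
    using dense by blast
  then show ?thesis
    by simp
qed

lemma norm_le_if_power2_le_inner:
  fixes x y :: "'a::real_inner"
  assumes "(norm x)\<^sup>2 \<le> x \<bullet> y"
  shows "norm x \<le> norm y"
proof (cases "x = 0")
  case False
  have "norm x * norm x \<le> norm x * norm y"
    using assms Cauchy_Schwarz_ineq2[of x y] by (simp add: power2_eq_square)
  then show ?thesis
    using False by simp
qed simp

section \<open>Self-adjoint operators bounded below\<close>

locale selfadjoint_operator = complex_structure_space J
  for J :: "'h::{real_inner,complete_space} \<Rightarrow> 'h" +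
  fixes D :: "'h set" and A :: "'h \<Rightarrow> 'h"
  assumes selfadjoint: "selfadjoint J D A"
begin

lemma domain_csubspace: "csubspace J D"
  using selfadjoint by (simp add: selfadjoint_def clinear_on_def)

lemma domain_subspace: "subspace D"
  using csubspace_imp_subspace[OF domain_csubspace] .

lemma domain_dense: "closure D = UNIV"
  using selfadjoint by (simp add: selfadjoint_def)

lemma op_cscale: "x \<in> D \<Longrightarrow> A (cscale J c x) = cscale J c (A x)"
  using selfadjoint by (simp add: selfadjoint_def clinear_on_def)

lemma op_J: "x \<in> D \<Longrightarrow> A (J x) = J (A x)"
  using op_cscale[of x \<i>] by simp

lemma real_linear_on_op: "real_linear_on D A"
  using selfadjoint op_cscale[of _ "complex_of_real r" for r]
  by (simp add: real_linear_on_def selfadjoint_def clinear_on_def)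

lemma op_symmetric: "x \<in> D \<Longrightarrow> y \<in> D \<Longrightarrow> cinner J (A x) y = cinner J x (A y)"
  using selfadjoint by (simp add: selfadjoint_def)

lemma adjoint_domainI:
  assumes adj: "\<And>w. w \<in> D \<Longrightarrow> cinner J (A w) y = cinner J w z"
  shows "y \<in> D" and "A y = z"
proof -
  have "{y. \<exists>z. \<forall>x\<in>D. cinner J (A x) y = cinner J x z} = D"
    using selfadjoint by (simp add: selfadjoint_def)
  then show y: "y \<in> D"
    using adj by blast
  have "w \<bullet> (A y - z) = 0" if "w \<in> D" for w
    using adj[OF that] op_symmetric[OF that y] by (simp add: cinner_eq_iff inner_diff_right)
  then show "A y = z"
    using dense_orthogonal_eq_0[OF domain_dense] by fastforce
qed

lemma closed_graph:
  assumes u: "\<And>n. u n \<in> D" and lim: "u \<longlonglongrightarrow> x" and lim_A: "(\<lambda>n. A (u n)) \<longlonglongrightarrow> v"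
  shows "x \<in> D" and "A x = v"
proof -
  have "cinner J (A w) x = cinner J w v" if w: "w \<in> D" for w
  proof (rule LIMSEQ_unique)
    show "(\<lambda>n. cinner J (A w) (u n)) \<longlonglongrightarrow> cinner J (A w) x"
      by (rule tendsto_cinner_right[OF lim])
    show "(\<lambda>n. cinner J (A w) (u n)) \<longlonglongrightarrow> cinner J w v"
      using tendsto_cinner_right[OF lim_A] op_symmetric[OF w u] by simp
  qed
  then show "x \<in> D" "A x = v"
    using adjoint_domainI by blast+
qed


lemma real_linear_on_shift_op: "real_linear_on D (\<lambda>x. A x - cscale J \<mu> x)"
  using real_linear_on_op
  by (simp add: real_linear_on_def cscale_add_right cscale_def algebra_simps)

lemma shift_op_J: "x \<in> D \<Longrightarrow> A (J x) - cscale J \<mu> (J x) = J (A x - cscale J \<mu> x)"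
  by (simp only: op_J J_diff J_cscale)

lemma shift_op_range_closed:
  assumes bound: "\<And>x. x \<in> D \<Longrightarrow> norm x \<le> norm (A x - cscale J \<mu> x)"
  shows "closed ((\<lambda>x. A x - cscale J \<mu> x) ` D)"
  unfolding closed_sequential_limits
proof (intro allI impI, elim conjE)
  let ?B = "\<lambda>x. A x - cscale J \<mu> x"
  fix s l assume s: "\<forall>n. s n \<in> ?B ` D" and lim: "s \<longlonglongrightarrow> l"
  have "\<forall>n. \<exists>v\<in>D. s n = ?B v"
    using s by blast
  then obtain u where u: "\<And>n. u n \<in> D" and su: "\<And>n. s n = ?B (u n)"
    by metis
  have "Cauchy u"
  proof (rule metric_CauchyI)
    fix e :: real assume "e > 0"
    then obtain M where M: "\<forall>m\<ge>M. \<forall>n\<ge>M. dist (s m) (s n) < e"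
      using LIMSEQ_imp_Cauchy[OF lim] metric_CauchyD by blast
    have "dist (u m) (u n) \<le> dist (s m) (s n)" for m n
      using bound[of "u m - u n"] u subspace_diff[OF domain_subspace]
        real_linear_on_diff[OF real_linear_on_shift_op domain_subspace]
      by (simp add: dist_norm su)
    then show "\<exists>M. \<forall>m\<ge>M. \<forall>n\<ge>M. dist (u m) (u n) < e"
      using M by (meson order.strict_trans1)
  qed
  then obtain x where x: "u \<longlonglongrightarrow> x"
    using Cauchy_convergent_iff convergent_def by blast
  have "(\<lambda>n. A (u n)) \<longlonglongrightarrow> l + cscale J \<mu> x"
    using tendsto_add[OF lim tendsto_cscale[OF x, of \<mu>]] by (simp add: su)
  then have "x \<in> D" "A x = l + cscale J \<mu> x"
    using closed_graph[OF u x] by blast+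
  then have "l = ?B x"
    by simp
  then show "l \<in> ?B ` D"
    using \<open>x \<in> D\<close> by blast
qed

lemma shift_op_range_orthogonal_trivial:
  assumes coercive: "\<And>x. x \<in> D \<Longrightarrow> (norm x)\<^sup>2 \<le> x \<bullet> (A x - cscale J \<mu> x)"
    and orth: "\<forall>s\<in>(\<lambda>x. A x - cscale J \<mu> x) ` D. s \<bullet> y = 0"
  shows "y = 0"
proof -
  have "cinner J (A x) y = cinner J x (cscale J (cnj \<mu>) y)" if x: "x \<in> D" for x
  proof -
    have "A (J x) - cscale J \<mu> (J x) \<in> (\<lambda>x. A x - cscale J \<mu> x) ` D"
      using csubspace_J[OF domain_csubspace x] by blast
    then have "J (A x - cscale J \<mu> x) \<bullet> y = 0"
      using orth shift_op_J[OF x] by metis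
    moreover have "(A x - cscale J \<mu> x) \<bullet> y = 0"
      using orth x by blast
    ultimately have "cinner J (A x - cscale J \<mu> x) y = 0"
      by (simp add: cinner_eq_0_iff inner_J_left del: J_diff)
    then show ?thesis
      by (simp add: cinner_diff_left cinner_cscale_left cinner_cscale_right)
  qed
  then have "y \<in> D"
    by (rule adjoint_domainI)
  then have "(norm y)\<^sup>2 \<le> 0"
    using coercive[of y] orth by (simp add: inner_commute)
  then show ?thesis
    by simp
qed

lemma not_in_spec_if_coercive:
  assumes coercive: "\<And>x. x \<in> D \<Longrightarrow> (norm x)\<^sup>2 \<le> x \<bullet> (A x - cscale J \<mu> x)"
  shows "\<mu> \<notin> spec_on J D UNIV A"
proof -
  let ?B = "\<lambda>x. A x - cscale J \<mu> x"
  have bound: "norm x \<le> norm (?B x)" if "x \<in> D" for x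
    using norm_le_if_power2_le_inner[OF coercive[OF that]] .
  have "inj_on ?B D"
  proof (rule inj_onI)
    fix x y assume "x \<in> D" "y \<in> D" "?B x = ?B y"
    then show "x = y"
      using bound[of "x - y"] subspace_diff[OF domain_subspace]
        real_linear_on_diff[OF real_linear_on_shift_op domain_subspace]
      by simp
  qed
  moreover have "?B ` D = UNIV"
    by (intro closed_subspace_eq_UNIV_if_orthogonal_trivial shift_op_range_closed[OF bound]
        real_linear_on_subspace_image[OF real_linear_on_shift_op domain_subspace]
        shift_op_range_orthogonal_trivial[OF coercive])
  ultimately have "bij_betw ?B D UNIV"
    by (simp add: bij_betw_def)
  moreover have "\<forall>x\<in>D. norm x \<le> 1 * norm (?B x)"
    using bound by simp
  ultimately show ?thesis
    unfolding spec_on_def by blast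
qed

text \<open>Without this, the infimum in the hypothesis on a would be an unspecified value.\<close>

lemma bounded_below_spec_bdd_below:
  assumes "bounded_below_op J D A"
  shows "bdd_below (Re ` spec_on J D UNIV A)"
proof -
  obtain c where c: "\<And>x. x \<in> D \<Longrightarrow> c * (norm x)\<^sup>2 \<le> Re (cinner J x (A x))"
    using assms by (auto simp: bounded_below_op_def)
  have "\<mu> \<notin> spec_on J D UNIV A" if "Re \<mu> < c - 1" for \<mu>
  proof (rule not_in_spec_if_coercive)
    fix x assume "x \<in> D"
    then have "c * (norm x)\<^sup>2 \<le> x \<bullet> A x"
      using c by simp
    moreover have "x \<bullet> cscale J \<mu> x = Re \<mu> * (norm x)\<^sup>2"
      by (simp add: cscale_def power2_norm_eq_inner inner_add_right)
    moreover have "Re \<mu> * (norm x)\<^sup>2 + (norm x)\<^sup>2 \<le> c * (norm x)\<^sup>2"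
      using that mult_right_mono[of "Re \<mu> + 1" c "(norm x)\<^sup>2"] by (simp add: distrib_right)
    ultimately show "(norm x)\<^sup>2 \<le> x \<bullet> (A x - cscale J \<mu> x)"
      unfolding inner_diff_right by linarith
  qed
  then have low: "c - 1 \<le> Re \<mu>" if "\<mu> \<in> spec_on J D UNIV A" for \<mu>
    using that by (meson not_less)
  show ?thesis
  proof (rule bdd_belowI)
    fix t assume "t \<in> Re ` spec_on J D UNIV A"
    then show "c - 1 \<le> t"
      using low by (elim imageE) simp
  qed
qed

lemma below_Inf_spec_not_in_spec:
  assumes "bounded_below_op J D A" and "a < Inf (Re ` spec_on J D UNIV A)"
  shows "complex_of_real a \<notin> spec_on J D UNIV A"
proof
  assume "complex_of_real a \<in> spec_on J D UNIV A"
  then have "Inf (Re ` spec_on J D UNIV A) \<le> a"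
    using cInf_lower[OF imageI[of _ _ Re] bounded_below_spec_bdd_below[OF assms(1)]] by fastforce
  then show False
    using assms(2) by simp
qed

end

section \<open>The compressions to a trial space\<close>

locale shifted_square_root = selfadjoint_operator J D A
  for J :: "'h::{real_inner,complete_space} \<Rightarrow> 'h" and D A +
  fixes a :: real and DT :: "'h set" and T :: "'h \<Rightarrow> 'h"
  assumes bounded_below: "bounded_below_op J D A"
    and below_spectrum: "a < Inf (Re ` spec_on J D UNIV A)"
    and square_root: "is_pos_sqrt J D (\<lambda>x. A x - a *\<^sub>R x) DT T"

sublocale shifted_square_root \<subseteq> root: selfadjoint_operator J DT T
  using square_root by unfold_locales (simp add: is_pos_sqrt_def)

context shifted_square_root
begin

lemma bij_shift: "bij_betw (\<lambda>x. A x - a *\<^sub>R x) D UNIV"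
  using below_Inf_spec_not_in_spec[OF bounded_below below_spectrum] by (simp add: spec_on_def)

lemma shifted_inverse_eqI:
  assumes "x \<in> D" "A x - a *\<^sub>R x = y"
  shows "shifted_inverse D A a y = x"
  unfolding shifted_inverse_def
proof (rule the_equality)
  fix x' assume x': "x' \<in> D \<and> A x' - a *\<^sub>R x' = y"
  have "inj_on (\<lambda>x. A x - a *\<^sub>R x) D"
    using bij_shift by (rule bij_betw_imp_inj_on)
  then show "x' = x"
    by (rule inj_onD) (use x' assms in auto)
qed (use assms in blast)

lemma shifted_inverse:
  shows shifted_inverse_in_domain: "shifted_inverse D A a y \<in> D"
    and shift_shifted_inverse: "A (shifted_inverse D A a y) - a *\<^sub>R shifted_inverse D A a y = y"
proof -
  have "y \<in> (\<lambda>x. A x - a *\<^sub>R x) ` D"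
    using bij_shift by (simp add: bij_betw_def)
  then obtain x where "x \<in> D" "A x - a *\<^sub>R x = y"
    by blast
  then show "shifted_inverse D A a y \<in> D" "A (shifted_inverse D A a y) - a *\<^sub>R shifted_inverse D A a y = y"
    using shifted_inverse_eqI by simp_all
qed

lemma linear_shifted_inverse: "linear (shifted_inverse D A a)"
proof (rule linearI)
  let ?R = "shifted_inverse D A a"
  fix u v :: 'h and r :: real
  show "?R (u + v) = ?R u + ?R v"
    using shifted_inverse_in_domain[of u] shifted_inverse_in_domain[of v]
      shift_shifted_inverse[of u] shift_shifted_inverse[of v]
    by (intro shifted_inverse_eqI)
      (simp_all add: subspace_add[OF domain_subspace] real_linear_on_add[OF real_linear_on_op] algebra_simps)
  show "?R (r *\<^sub>R u) = r *\<^sub>R ?R u"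
    using shifted_inverse_in_domain[of u] shift_shifted_inverse[of u]
    by (intro shifted_inverse_eqI)
      (simp_all add: subspace_scale[OF domain_subspace] real_linear_on_scaleR[OF real_linear_on_op] algebra_simps)
qed

lemma root_root: "x \<in> D \<Longrightarrow> T (T x) = A x - a *\<^sub>R x"
  and domain_eq: "D = {x \<in> DT. T x \<in> DT}"
  using square_root by (auto simp: is_pos_sqrt_def)

lemma root_0: "T 0 = 0"
  using real_linear_on_0[OF root.real_linear_on_op root.domain_subspace] .

lemma root_eq_0_iff: "x \<in> DT \<Longrightarrow> T x = 0 \<longleftrightarrow> x = 0"
proof
  assume x: "x \<in> DT" and Tx: "T x = 0"
  then have xD: "x \<in> D"
    using domain_eq root_0 subspace_0[OF root.domain_subspace] by simp
  moreover have "A x - a *\<^sub>R x = 0"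
    using root_root[OF xD] Tx root_0 by simp
  ultimately have "shifted_inverse D A a 0 = x"
    by (rule shifted_inverse_eqI)
  moreover have "shifted_inverse D A a 0 = 0"
    using linear_0[OF linear_shifted_inverse] .
  ultimately show "x = 0"
    by simp
qed (simp add: root_0)

lemma root_shifted_inverse_root:
  assumes x: "x \<in> DT"
  shows "T (shifted_inverse D A a (T x)) = x"
proof -
  let ?z = "shifted_inverse D A a (T x)"
  have z: "?z \<in> DT" "T ?z \<in> DT"
    using shifted_inverse_in_domain domain_eq by auto
  have "T (T ?z) = T x"
    using root_root[OF shifted_inverse_in_domain] shift_shifted_inverse by simp
  then have "T (T ?z - x) = 0"
    using real_linear_on_diff[OF root.real_linear_on_op root.domain_subspace z(2) x] by simp
  then show ?thesis
    using root_eq_0_iff subspace_diff[OF root.domain_subspace z(2) x] by simp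
qed

lemma cinner_root_shifted_inverse_root:
  assumes "x \<in> DT" "y \<in> DT"
  shows "cinner J (T y) (shifted_inverse D A a (T x)) = cinner J y x"
  using root.op_symmetric[OF assms(2), of "shifted_inverse D A a (T x)"]
    shifted_inverse_in_domain domain_eq root_shifted_inverse_root[OF assms(1)]
  by auto

end

locale trial_space = shifted_square_root J D A a DT T
  for J :: "'h::{real_inner,complete_space} \<Rightarrow> 'h" and D A a DT T +
  fixes L :: "'h set" and B :: "'h set"
  assumes L_csubspace: "csubspace J L"
    and finite_B: "finite B" and span_B: "span B = L"
    and L_subset: "L \<subseteq> DT"
begin

lemma real_linear_on_root_L: "real_linear_on L T"
  using real_linear_on_subset[OF root.real_linear_on_op L_subset] .

lemma root_image_span: "T ` L = span (T ` B)"
  using real_linear_on_span_image[OF finite_B] real_linear_on_root_L span_B by simp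

lemma root_image_csubspace: "csubspace J (T ` L)"
proof -
  have "J (T x) \<in> T ` L" if "x \<in> L" for x
    using csubspace_J[OF L_csubspace that] root.op_J that L_subset by (metis image_eqI subsetD)
  then show ?thesis
    unfolding csubspace_def by (metis imageE root_image_span subspace_span)
qed

lemma root_image_finite_dim: "finite (T ` B)" "span (T ` B) = T ` L"
  using finite_B root_image_span by simp_all

lemma form_compression_eqI:
  assumes z: "z \<in> L"
    and form: "\<And>y. y \<in> L \<Longrightarrow> cinner J y z = cinner J (T y) (T x) + complex_of_real a * cinner J y x"
  shows "form_compression J T a L x = z"
  unfolding form_compression_def
proof (rule the_equality)
  fix z' assume z': "z' \<in> L \<and> (\<forall>y\<in>L. cinner J y z' = cinner J (T y) (T x) + complex_of_real a * cinner J y x)"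
  then have "z' - z \<in> L"
    using z subspace_diff csubspace_imp_subspace[OF L_csubspace] by blast
  then have "cinner J (z' - z) (z' - z) = 0"
    using z' form by (simp add: cinner_diff_right)
  then show "z' = z"
    by simp
qed (use z form in blast)

lemma form_compression:
  assumes x: "x \<in> L"
  shows form_compression_in: "form_compression J T a L x \<in> L"
    and cinner_form_compression:
      "\<And>y. y \<in> L \<Longrightarrow> cinner J y (form_compression J T a L x) = cinner J (T y) (T x) + complex_of_real a * cinner J y x"
proof -
  define \<phi> where "\<phi> y = T y \<bullet> T x + a * (y \<bullet> x)" for y
  have "real_linear_on (span B) \<phi>"
    using real_linear_on_root_L span_B
    by (auto simp: real_linear_on_def \<phi>_def inner_add_left algebra_simps)
  then obtain z where z: "z \<in> L" "\<And>y. y \<in> L \<Longrightarrow> cinner J y z = Complex (\<phi> y) (\<phi> (J y))"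
    using csubspace_riesz[OF _ finite_B] L_csubspace span_B by metis
  have z_form: "cinner J y z = cinner J (T y) (T x) + complex_of_real a * cinner J y x" if y: "y \<in> L" for y
  proof -
    have "T (J y) = J (T y)"
      using root.op_J y L_subset by blast
    then show ?thesis
      using z(2)[OF y] by (simp add: \<phi>_def complex_eq_iff cinner_def inner_J_left)
  qed
  then have "form_compression J T a L x = z"
    using form_compression_eqI z(1) by blast
  then show "form_compression J T a L x \<in> L"
    "\<And>y. y \<in> L \<Longrightarrow> cinner J y (form_compression J T a L x) = cinner J (T y) (T x) + complex_of_real a * cinner J y x"
    using z(1) z_form by simp_all
qed

lemma real_linear_on_form_compression: "real_linear_on L (form_compression J T a L)"
proof (rule real_linear_onI)
  have L: "subspace L"
    using csubspace_imp_subspace[OF L_csubspace] .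
  fix x y r assume x: "x \<in> L"
  show "form_compression J T a L (r *\<^sub>R x) = r *\<^sub>R form_compression J T a L x"
    using form_compression[OF x] real_linear_on_scaleR[OF real_linear_on_root_L x]
    by (intro form_compression_eqI) (simp_all add: subspace_scale[OF L] cinner_scaleR_right algebra_simps)
  assume y: "y \<in> L"
  show "form_compression J T a L (x + y) = form_compression J T a L x + form_compression J T a L y"
    using form_compression[OF x] form_compression[OF y] real_linear_on_add[OF real_linear_on_root_L x y]
    by (intro form_compression_eqI) (simp_all add: subspace_add[OF L] cinner_add_right algebra_simps)
qed

lemma form_compression_eigen_iff:
  assumes x: "x \<in> L"
  shows "form_compression J T a L x = l *\<^sub>R x \<longleftrightarrow>
    (\<forall>y\<in>L. cinner J (T y) (T x) = complex_of_real (l - a) * cinner J y x)"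
proof
  assume "form_compression J T a L x = l *\<^sub>R x"
  then show "\<forall>y\<in>L. cinner J (T y) (T x) = complex_of_real (l - a) * cinner J y x"
    using cinner_form_compression[OF x] by (simp add: cinner_scaleR_right algebra_simps)
next
  assume "\<forall>y\<in>L. cinner J (T y) (T x) = complex_of_real (l - a) * cinner J y x"
  then show "form_compression J T a L x = l *\<^sub>R x"
    using x subspace_scale[OF csubspace_imp_subspace[OF L_csubspace]]
    by (intro form_compression_eqI) (simp_all add: cinner_scaleR_right algebra_simps)
qed

lemma projected_inverse_eigen_iff:
  assumes x: "x \<in> L"
  shows "orth_proj J (T ` L) (shifted_inverse D A a (T x)) = m *\<^sub>R T x \<longleftrightarrow>
    (\<forall>y\<in>L. cinner J y x = complex_of_real m * cinner J (T y) (T x))"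
proof -
  let ?g = "shifted_inverse D A a (T x)"
  have inner_g: "cinner J (T y) ?g = cinner J y x" if "y \<in> L" for y
    using cinner_root_shifted_inverse_root x that L_subset by blast
  show ?thesis
  proof
    assume "orth_proj J (T ` L) ?g = m *\<^sub>R T x"
    then show "\<forall>y\<in>L. cinner J y x = complex_of_real m * cinner J (T y) (T x)"
      using orth_proj_orthogonal[OF root_image_csubspace root_image_finite_dim, of ?g] inner_g
      by (simp add: cinner_diff_right cinner_scaleR_right)
  next
    assume "\<forall>y\<in>L. cinner J y x = complex_of_real m * cinner J (T y) (T x)"
    then show "orth_proj J (T ` L) ?g = m *\<^sub>R T x"
      using x inner_g subspace_scale[OF csubspace_imp_subspace[OF root_image_csubspace]]
      by (intro orth_proj_eqI csubspace_imp_subspace[OF root_image_csubspace])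
        (auto simp: cinner_diff_right cinner_scaleR_right)
  qed
qed

lemma eigenvector_correspondence:
  assumes la: "l \<noteq> a"
  shows "(\<exists>x\<in>L. x \<noteq> 0 \<and> form_compression J T a L x = l *\<^sub>R x) \<longleftrightarrow>
    (\<exists>g\<in>T ` L. g \<noteq> 0 \<and> orth_proj J (T ` L) (shifted_inverse D A a g) = inverse (l - a) *\<^sub>R g)"
proof -
  have "form_compression J T a L x = l *\<^sub>R x \<longleftrightarrow>
      orth_proj J (T ` L) (shifted_inverse D A a (T x)) = inverse (l - a) *\<^sub>R T x" if x: "x \<in> L" for x
  proof -
    have "u = complex_of_real (l - a) * v \<longleftrightarrow> v = complex_of_real (inverse (l - a)) * u" for u v
      using la by (auto simp: field_simps)
    then show ?thesis
      unfolding form_compression_eigen_iff[OF x] projected_inverse_eigen_iff[OF x] by simp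
  qed
  moreover have "T x \<noteq> 0 \<longleftrightarrow> x \<noteq> 0" if "x \<in> L" for x
    using root_eq_0_iff that L_subset by blast
  ultimately show ?thesis
    by (auto simp: image_iff)
qed

lemma compression_spectrum_iff:
  assumes "l \<noteq> a"
  shows "complex_of_real l \<in> spec_on J L L (form_compression J T a L) \<longleftrightarrow>
    complex_of_real (inverse (l - a)) \<in>
      spec_on J (T ` L) (T ` L) (\<lambda>g. orth_proj J (T ` L) (shifted_inverse D A a g))"
proof -
  let ?C = "form_compression J T a L"
  let ?Q = "\<lambda>g. orth_proj J (T ` L) (shifted_inverse D A a g)"
  have "real_linear_on (span B) ?C" "?C ` span B \<subseteq> span B"
    using real_linear_on_form_compression form_compression_in span_B by auto
  note spec_C = spec_on_finite_span_iff_eigenvector[OF finite_B this, unfolded span_B]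
  have "real_linear_on (span (T ` B)) ?Q" "?Q ` span (T ` B) \<subseteq> span (T ` B)"
    using linear_compose[OF linear_shifted_inverse
        linear_orth_proj[OF root_image_csubspace root_image_finite_dim]]
      orth_proj_in[OF root_image_csubspace root_image_finite_dim] root_image_finite_dim(2)
    by (auto intro: linear_imp_real_linear_on simp: o_def)
  note spec_Q = spec_on_finite_span_iff_eigenvector[OF root_image_finite_dim(1) this,
      unfolded root_image_finite_dim(2)]
  show ?thesis
    using spec_C[of l J] spec_Q[of "inverse (l - a)" J] eigenvector_correspondence[OF assms] by blast
qed

end

theorem lemma4p5:
  fixes J :: "'h::{real_inner,complete_space} \<Rightarrow> 'h"
    and D :: "'h set" and A :: "'h \<Rightarrow> 'h" and a :: real
    and DT :: "'h set" and T :: "'h \<Rightarrow> 'h" and L :: "'h set"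
  assumes cs: "complex_structure J"
    and sep: "separable_space (euclidean :: 'h topology)"
    and infdim: "\<not> (\<exists>B. finite B \<and> span B = (UNIV :: 'h set))"
    and sa: "selfadjoint J D A"
    and bb: "bounded_below_op J D A"
    and a_lt: "a < Inf (Re ` spec_on J D UNIV A)"
    and sqrt: "is_pos_sqrt J D (\<lambda>x. A x - a *\<^sub>R x) DT T"
    and L_sub: "csubspace J L" and L_fin: "\<exists>B. finite B \<and> span B = L" and L_dom: "L \<subseteq> DT"
  shows "\<forall>l::real. l \<noteq> a \<longrightarrow>
     (complex_of_real l \<in> spec_on J L L (form_compression J T a L)
      \<longleftrightarrow> complex_of_real (inverse (l - a)) \<in>
          spec_on J (T ` L) (T ` L) (\<lambda>x. orth_proj J (T ` L) (shifted_inverse D A a x)))"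
proof -
  obtain B where "finite B" "span B = L"
    using L_fin by blast
  then interpret trial_space J D A a DT T L B
    using cs sa bb a_lt sqrt L_sub L_dom by unfold_locales
  show ?thesis
    using compression_spectrum_iff by blast
qed

end
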